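(* Consider a LAWS system with base model $F_W$, library $\mathcal L$, threshold $N_{\min}$, and the any-match inference rule, updated by the LAWS update protocol. Let $H_n$ be the expected LAWS cache hit rate after $n$ deployment queries drawn i.i.d. from $P_{\mathcal M}$. Then $H_n$ is non-decreasing in $n$: \[ H_1 \le H_2 \le \cdots \le H_n \le \cdots \le 1 . \]
   Context: $V$ is a finite vocabulary, $P_{\mathcal M}$ a distribution (generative model) over $V^*$, and $d_{\mathcal T}(s,s') = -\log_2 P_{\mathcal M}(s\wedge s')$ the trie metric ($s\wedge s'$ the longest common prefix). A parametrized expert is $e=(n^*,f,\phi,\tau^*,\varepsilon_{\mathrm{fit}})$ with signpost $n^*$, parameter extractor $\phi: V^*\to\mathbb{R}^k$, expert function $f:\mathbb{R}^k\to\mathbb{R}^{|V|}$, routing radius $\tau^*>0$ and fitting error $\varepsilon_{\mathrm{fit}}$; its routing ball is $\mathcal B(n^*,\tau^* ) = \{x : d_{\mathcal T}(x,n^* )\le\tau^*\}$. Any-match inference: a query $x$ is a cache hit (answered by $f_{e^*}(\phi_{e^*}(x))$ for the matching expert $e^*$ of smallest trie distance) whenever some expert's routing ball in $\mathcal L$ contains $x$; otherwise (cache miss) the base model $F_W(x)$ is run. LAWS update protocol: after computing $y=F_W(x)$, the observation is inserted into the trie, incrementing the count of the corresponding node $n$; if the count of $n$ reaches $N_{\min}$, an expert with signpost $n$ (fitted function, extractor, routing radius, fitting error) is added to $\mathcal L$. Experts are never removed. The hit rate is the probability that a fresh query from $P_{\mathcal M}$ is a cache hit. *)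

theory Defs
  imports "HOL-Probability.Probability"
begin

fun lcp :: "'v list \<Rightarrow> 'v list \<Rightarrow> 'v list" where
  "lcp (a # as) (b # bs) = (if a = b then a # lcp as bs else [])"
| "lcp _ _ = []"

definition prefix_prob :: "'v list pmf \<Rightarrow> 'v list \<Rightarrow> real" where
  "prefix_prob P w = measure_pmf.prob P {t. prefix w t}"

definition trie_dist :: "'v list pmf \<Rightarrow> 'v list \<Rightarrow> 'v list \<Rightarrow> ereal" where
  "trie_dist P s s' =
     (if prefix_prob P (lcp s s') = 0 then \<infinity>
      else ereal (- log 2 (prefix_prob P (lcp s s'))))"

text \<open>Parametrized expert e = (n*, f, phi, tau*, eps_fit); parameters live in real^'k.\<close>
record ('v, 'k) expert =
  signpost :: "'v list"
  efun :: "(real, 'k) vec \<Rightarrow> ('v \<Rightarrow> real)"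
  extractor :: "'v list \<Rightarrow> (real, 'k) vec"
  radius :: real
  fit_err :: real

definition routing_ball :: "'v list pmf \<Rightarrow> ('v, 'k::finite) expert \<Rightarrow> 'v list set" where
  "routing_ball P e = {x. trie_dist P x (signpost e) \<le> ereal (radius e)}"

definition cache_hit :: "'v list pmf \<Rightarrow> ('v, 'k::finite) expert set \<Rightarrow> 'v list \<Rightarrow> bool" where
  "cache_hit P L x \<longleftrightarrow> (\<exists>e\<in>L. x \<in> routing_ball P e)"

definition answer :: "'v list pmf \<Rightarrow> ('v list \<Rightarrow> ('v \<Rightarrow> real)) \<Rightarrow> ('v, 'k::finite) expert set
    \<Rightarrow> 'v list \<Rightarrow> ('v \<Rightarrow> real)" where
  "answer P FW L x =
     (if cache_hit P L x then
        (let e = (SOME e. e \<in> L \<and> x \<in> routing_ball P e \<and>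
                     (\<forall>e'\<in>L. x \<in> routing_ball P e' \<longrightarrow> trie_dist P x (signpost e) \<le> trie_dist P x (signpost e')))
         in efun e (extractor e x))
      else FW x)"

definition hit_rate :: "'v list pmf \<Rightarrow> ('v, 'k::finite) expert set \<Rightarrow> real" where
  "hit_rate P L = measure_pmf.prob P {x. cache_hit P L x}"

text \<open>System state: the observations stored in the trie (query, base-model output)
  and the library. The count of trie node n is the number of stored observations at n.\<close>
record ('v, 'k) laws_state =
  trie_obs :: "('v list \<times> ('v \<Rightarrow> real)) list"
  library :: "('v, 'k) expert set"

definition node_count :: "('v list \<times> ('v \<Rightarrow> real)) list \<Rightarrow> 'v list \<Rightarrow> nat" where
  "node_count obs n = length (filter (\<lambda>ob. fst ob = n) obs)"

definition laws_step ::
  "'v list pmf \<Rightarrow> ('v list \<Rightarrow> ('v \<Rightarrow> real)) \<Rightarrow> nat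
   \<Rightarrow> (('v list \<times> ('v \<Rightarrow> real)) list \<Rightarrow> 'v list \<Rightarrow> ('v, 'k::finite) expert)
   \<Rightarrow> ('v, 'k) laws_state \<Rightarrow> 'v list \<Rightarrow> ('v, 'k) laws_state" where
  "laws_step P FW Nmin fit st x =
     (if cache_hit P (library st) x then st
      else
        (let obs' = trie_obs st @ [(x, FW x)] in
         \<lparr> trie_obs = obs',
           library = (if node_count obs' x = Nmin
                      then insert (fit obs' x) (library st) else library st) \<rparr>))"

definition laws_run ::
  "'v list pmf \<Rightarrow> ('v list \<Rightarrow> ('v \<Rightarrow> real)) \<Rightarrow> nat
   \<Rightarrow> (('v list \<times> ('v \<Rightarrow> real)) list \<Rightarrow> 'v list \<Rightarrow> ('v, 'k::finite) expert)
   \<Rightarrow> ('v, 'k) laws_state \<Rightarrow> 'v list list \<Rightarrow> ('v, 'k) laws_state" where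
  "laws_run P FW Nmin fit st0 xs = foldl (laws_step P FW Nmin fit) st0 xs"

fun iid_pmf :: "'a pmf \<Rightarrow> nat \<Rightarrow> 'a list pmf" where
  "iid_pmf P 0 = return_pmf []"
| "iid_pmf P (Suc n) = bind_pmf (iid_pmf P n) (\<lambda>xs. map_pmf (\<lambda>x. xs @ [x]) P)"

definition expected_hit_rate ::
  "'v list pmf \<Rightarrow> ('v list \<Rightarrow> ('v \<Rightarrow> real)) \<Rightarrow> nat
   \<Rightarrow> (('v list \<times> ('v \<Rightarrow> real)) list \<Rightarrow> 'v list \<Rightarrow> ('v, 'k::finite) expert)
   \<Rightarrow> ('v, 'k) laws_state \<Rightarrow> nat \<Rightarrow> real" where
  "expected_hit_rate P FW Nmin fit st0 n =
     measure_pmf.expectation (iid_pmf P n)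
       (\<lambda>xs. hit_rate P (library (laws_run P FW Nmin fit st0 xs)))"

end

theory Submission
  imports Defs
begin

text \<open>Experts are never removed, so along every sequence of queries the library only grows
  and the hit rate of the library can only increase. A sample of n + 1 i.i.d. queries is a
  sample of n queries followed by one fresh query, so averaging this pathwise inequality
  gives H n \<le> H (n + 1).\<close>

lemma library_laws_step_subset: "library st \<subseteq> library (laws_step P FW Nmin fit st x)"
  unfolding laws_step_def Let_def by auto

lemma hit_rate_mono:
  assumes "L \<subseteq> L'"
  shows "hit_rate P L \<le> hit_rate P L'"
  unfolding hit_rate_def
proof (rule measure_pmf.finite_measure_mono)
  show "{x. cache_hit P L x} \<subseteq> {x. cache_hit P L' x}"
    using assms by (fastforce simp: cache_hit_def)
qed simp

lemma hit_rate_nonneg: "0 \<le> hit_rate P L"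
  unfolding hit_rate_def by simp

lemma hit_rate_le_1: "hit_rate P L \<le> 1"
  unfolding hit_rate_def by simp

lemma hit_rate_laws_run_snoc_mono:
  "hit_rate P (library (laws_run P FW Nmin fit st0 xs))
     \<le> hit_rate P (library (laws_run P FW Nmin fit st0 (xs @ [x])))"
  unfolding laws_run_def by (simp add: hit_rate_mono library_laws_step_subset)

lemma ennreal_expectation_pmf_bounded:
  fixes M :: "'a pmf" and g :: "'a \<Rightarrow> real"
  assumes "\<And>x. 0 \<le> g x" and "\<And>x. g x \<le> B"
  shows "ennreal (measure_pmf.expectation M g) = (\<integral>\<^sup>+x. ennreal (g x) \<partial>measure_pmf M)"
proof -
  have "integrable (measure_pmf M) g"
    by (rule measure_pmf.integrable_const_bound[where B = B]) (use assms in auto)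
  then show ?thesis
    by (rule nn_integral_eq_integral[symmetric]) (use assms in auto)
qed

lemma expectation_iid_pmf_le_Suc:
  fixes g :: "'a list \<Rightarrow> real"
  assumes nonneg: "\<And>xs. 0 \<le> g xs" and bounded: "\<And>xs. g xs \<le> B"
    and snoc_mono: "\<And>xs x. g xs \<le> g (xs @ [x])"
  shows "measure_pmf.expectation (iid_pmf P n) g \<le> measure_pmf.expectation (iid_pmf P (Suc n)) g"
proof -
  have "ennreal (measure_pmf.expectation (iid_pmf P n) g)
      = (\<integral>\<^sup>+xs. \<integral>\<^sup>+x. ennreal (g xs) \<partial>measure_pmf P \<partial>measure_pmf (iid_pmf P n))"
    by (simp add: ennreal_expectation_pmf_bounded[OF nonneg bounded] measure_pmf.emeasure_space_1)
  also have "\<dots> \<le> (\<integral>\<^sup>+xs. \<integral>\<^sup>+x. ennreal (g (xs @ [x])) \<partial>measure_pmf P \<partial>measure_pmf (iid_pmf P n))"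
    by (intro nn_integral_mono) (simp add: snoc_mono ennreal_leI)
  also have "\<dots> = ennreal (measure_pmf.expectation (iid_pmf P (Suc n)) g)"
    by (simp add: ennreal_expectation_pmf_bounded[OF nonneg bounded])
  finally show ?thesis
    by (simp add: ennreal_le_iff integral_nonneg_AE nonneg)
qed

lemma expected_hit_rate_le_Suc:
  "expected_hit_rate P FW Nmin fit st0 n \<le> expected_hit_rate P FW Nmin fit st0 (Suc n)"
  unfolding expected_hit_rate_def
  by (rule expectation_iid_pmf_le_Suc[where B = 1])
     (simp_all add: hit_rate_nonneg hit_rate_le_1 hit_rate_laws_run_snoc_mono)

lemma expected_hit_rate_le_1: "expected_hit_rate P FW Nmin fit st0 n \<le> 1"
  unfolding expected_hit_rate_def
  by (intro measure_pmf.integral_le_const measure_pmf.integrable_const_bound[where B = 1])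
     (simp_all add: hit_rate_nonneg hit_rate_le_1)

theorem mainTheorem4:
  fixes P :: "('v::finite) list pmf"
    and FW :: "'v list \<Rightarrow> ('v \<Rightarrow> real)"
    and Nmin :: nat
    and fit :: "('v list \<times> ('v \<Rightarrow> real)) list \<Rightarrow> 'v list \<Rightarrow> ('v, 'k::finite) expert"
    and st0 :: "('v, 'k) laws_state"
  assumes "Nmin \<ge> 1"
    and "\<forall>e\<in>library st0. radius e > 0"
    and "\<And>obs n. signpost (fit obs n) = n"
    and "\<And>obs n. radius (fit obs n) > 0"
  defines "H \<equiv> expected_hit_rate P FW Nmin fit st0"
  shows "\<forall>n\<ge>1. H n \<le> H (Suc n) \<and> H n \<le> 1"
  unfolding H_def by (simp add: expected_hit_rate_le_Suc expected_hit_rate_le_1)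

end
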